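(* For every integer $k\geq 1$, $$G_k(x)=\frac{1+2x\sum_{0\le j\le k-1,\; j\equiv k \pmod 2}C(k,j)4^{j}G_j(x)}{1-2^{k}(2^{k+1}+1)x}.$$ In particular, if $k$ is even then $G_k(x)$ is expressed (with rational-function coefficients, plus a rational function) through $G_0,G_2,\dots,G_{k-2}$ only, and if $k$ is odd then through $G_1,G_3,\dots,G_{k-2}$ only.
   Context: The Stern polynomials $B_n(t)\in\mathbb{Z}[t]$ are defined by $B_0(t)=0$, $B_1(t)=1$, and for $n\geq 1$: $B_{2n}(t)=tB_n(t)$, $B_{2n+1}(t)=B_n(t)+B_{n+1}(t)$. For $n\geq1$ let $e(n)=\deg B_n(t)$. For $k,n\geq 0$ let $S_k(n)=\sum_{a\geq 1:\;e(a)=n}a^{k}$ (a finite sum) and $G_k(x)=\sum_{a=1}^{\infty}a^{k}x^{e(a)}=\sum_{n=0}^{\infty}S_k(n)x^n$. $C(k,j)=\binom{k}{j}$. *)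

theory Defs
  imports "HOL-Computational_Algebra.Computational_Algebra"
begin

text \<open>Stern polynomials: B 0 = 0, B 1 = 1, B (2n) = t B n, B (2n+1) = B n + B (n+1).\<close>
function stern_poly :: "nat \<Rightarrow> int poly" where
  "stern_poly 0 = 0"
| "stern_poly (Suc 0) = 1"
| "stern_poly (Suc (Suc m)) =
     (if even m then [:0, 1:] * stern_poly (Suc (m div 2))
      else stern_poly (Suc (m div 2)) + stern_poly (Suc (Suc (m div 2))))"
  by pat_completeness auto
termination
  by (relation "measure id") (auto elim: oddE)

definition stern_e :: "nat \<Rightarrow> nat" where
  "stern_e n = degree (stern_poly n)"

definition stern_S :: "nat \<Rightarrow> nat \<Rightarrow> nat" where
  "stern_S k n = (\<Sum>a\<in>{a. 1 \<le> a \<and> stern_e a = n}. a ^ k)"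

definition stern_G :: "nat \<Rightarrow> rat fps" where
  "stern_G k = Abs_fps (\<lambda>n. of_nat (stern_S k n))"

end

theory Submission
  imports Defs
begin

(* Proof of the recurrence for G_k = \<Sum>_{a\<ge>1} a^k x^{e(a)}, e(a) = deg B_a.
   1. The Stern polynomials have nonnegative coefficients and B_a \<noteq> 0 for a \<ge> 1, so the
      degree of B_{2b+1} = B_b + B_{b+1} is the maximum of the degrees. This gives
      e(2b) = e(b) + 1, e(2b+1) = max (e b) (e (b+1)) and |e(b+1) - e(b)| \<le> 1.
   2. Hence e(2b) = e(4b+1) = e(4b-1) = e(b) + 1 for b \<ge> 1; since every a \<ge> 2 has
      exactly one of these three forms, the level set {a \<ge> 1. e a = n+1} is the disjoint
      union of the images of {a \<ge> 1. e a = n} under b \<mapsto> 2b, 4b+1, 4b-1.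
   3. Summing a^k over this decomposition and expanding (4b+1)^k + (4b-1)^k binomially
      yields the recurrence S_k(n+1) = 2^k (2^(k+1)+1) S_k(n) + 2 \<Sum>_j C(k,j) 4^j S_j(n),
      the sum running over j < k with j \<equiv> k (mod 2).
   4. A first-order linear recurrence for the coefficients of a power series determines it
      as a rational expression in x; with S_k(0) = 1 this is the claimed formula. *)

section \<open>Stern polynomials\<close>

lemma stern_poly_double: "stern_poly (2 * n) = [:0, 1:] * stern_poly n"
proof (cases n)
  case (Suc m)
  then have "2 * n = Suc (Suc (2 * m))" by simp
  then show ?thesis using Suc by simp
qed simp

lemma stern_poly_odd: "stern_poly (2 * n + 1) = stern_poly n + stern_poly (n + 1)"
proof (cases n)
  case (Suc m)
  then have "2 * n + 1 = Suc (Suc (2 * m + 1))" by simp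
  then show ?thesis using Suc by simp
qed simp

lemma stern_induct [case_names zero one double odd]:
  assumes "P 0" and "P 1"
    and double: "\<And>m. m \<ge> 1 \<Longrightarrow> P m \<Longrightarrow> P (2 * m)"
    and odd: "\<And>m. m \<ge> 1 \<Longrightarrow> P m \<Longrightarrow> P (m + 1) \<Longrightarrow> P (2 * m + 1)"
  shows "P (n :: nat)"
proof (induction n rule: less_induct)
  case (less n)
  define m where "m = n div 2"
  have "n \<le> 1 \<or> (n = 2 * m \<and> m \<ge> 1) \<or> (n = 2 * m + 1 \<and> m \<ge> 1)"
    unfolding m_def by presburger
  then consider "n \<le> 1" | "n = 2 * m" "m \<ge> 1" | "n = 2 * m + 1" "m \<ge> 1"
    by blast
  then show ?case
  proof cases
    case 1
    then show ?thesis using assms(1,2) by (cases n) auto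
  next
    case 2
    then show ?thesis using double less by simp
  next
    case 3
    then show ?thesis using odd less by simp
  qed
qed

lemma stern_poly_coeff_nonneg: "coeff (stern_poly n) i \<ge> 0"
proof (induction n arbitrary: i rule: stern_induct)
  case one
  then show ?case by (simp add: coeff_1)
next
  case (double m)
  then show ?case by (cases i) (simp_all add: stern_poly_double)
next
  case (odd m)
  then show ?case unfolding stern_poly_odd by simp
qed simp

lemma stern_poly_at_1_pos: "n \<ge> 1 \<Longrightarrow> poly (stern_poly n) 1 > 0"
proof (induction n rule: stern_induct)
  case (odd m)
  then show ?case unfolding stern_poly_odd by simp
qed (simp_all add: stern_poly_double)

lemma stern_poly_nonzero: "n \<ge> 1 \<Longrightarrow> stern_poly n \<noteq> 0"
  using stern_poly_at_1_pos by fastforce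

section \<open>The degree sequence e\<close>

text \<open>Leading coefficients of polynomials with nonnegative coefficients cannot cancel.\<close>

lemma degree_add_nonneg_coeffs:
  fixes p q :: "'a :: linordered_idom poly"
  assumes "\<And>i. coeff p i \<ge> 0" and "\<And>i. coeff q i \<ge> 0"
  shows "degree (p + q) = max (degree p) (degree q)"
proof (rule antisym)
  have "degree r \<le> degree (p + q)" if "r = p \<or> r = q" for r
  proof (cases "r = 0")
    case False
    have "coeff r (degree r) > 0"
      using that False assms leading_coeff_neq_0 by (metis order_le_less)
    then have "coeff (p + q) (degree r) \<noteq> 0"
      using that assms[of "degree r"] by auto
    then show ?thesis by (rule le_degree)
  qed simp
  then show "max (degree p) (degree q) \<le> degree (p + q)" by simp
qed (rule degree_add_le_max)

lemma stern_e_double: "n \<ge> 1 \<Longrightarrow> stern_e (2 * n) = stern_e n + 1"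
  unfolding stern_e_def
  using stern_poly_nonzero[of n] by (simp add: stern_poly_double degree_mult_eq)

lemma stern_e_odd: "stern_e (2 * n + 1) = max (stern_e n) (stern_e (n + 1))"
  unfolding stern_e_def stern_poly_odd
  by (rule degree_add_nonneg_coeffs) (rule stern_poly_coeff_nonneg)+

lemma stern_e_step: "stern_e (n + 1) \<le> stern_e n + 1 \<and> stern_e n \<le> stern_e (n + 1) + 1"
proof (induction n rule: stern_induct)
  case zero
  then show ?case by (simp add: stern_e_def)
next
  case one
  then show ?case using stern_e_double[of 1] by (simp add: stern_e_def)
next
  case (double m)
  then show ?case using stern_e_odd[of m] stern_e_double[of m] by auto
next
  case (odd m)
  have "2 * m + 1 + 1 = 2 * (m + 1)" by simp
  then show ?case using odd stern_e_odd[of m] stern_e_double[of "m + 1"] by auto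
qed

lemma stern_e_4b_plus_1: "b \<ge> 1 \<Longrightarrow> stern_e (4 * b + 1) = stern_e b + 1"
  using stern_e_odd[of "2 * b"] stern_e_double[of b] stern_e_odd[of b] stern_e_step[of b]
  by (simp add: mult.assoc[symmetric])

lemma stern_e_4b_minus_1: "b \<ge> 1 \<Longrightarrow> stern_e (4 * b - 1) = stern_e b + 1"
proof -
  assume "b \<ge> 1"
  then obtain c where b: "b = c + 1" by (metis add.commute le_Suc_ex)
  have split: "4 * b - 1 = 2 * (2 * c + 1) + 1" and sibling: "2 * c + 1 + 1 = 2 * b"
    using b by simp_all
  have "stern_e (4 * b - 1) = max (stern_e (2 * c + 1)) (stern_e (2 * b))"
    unfolding split stern_e_odd sibling ..
  moreover have "stern_e (2 * c + 1) \<le> stern_e b + 1"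
    using b stern_e_odd[of c] stern_e_step[of c] by simp
  ultimately show ?thesis using stern_e_double[OF \<open>b \<ge> 1\<close>] by simp
qed

lemma nat_ge_2_cases:
  fixes a :: nat
  assumes "a \<ge> 2"
  obtains b where "b \<ge> 1" "a = 2 * b" | b where "b \<ge> 1" "a = 4 * b + 1"
    | b where "b \<ge> 1" "a = 4 * b - 1"
proof -
  define b where "b = a div 4"
  have "even a \<or> a = 4 * b + 1 \<or> a = 4 * (b + 1) - 1"
    unfolding b_def by presburger
  then consider "even a" | "a = 4 * b + 1" | "a = 4 * (b + 1) - 1"
    by blast
  then show ?thesis
  proof cases
    case 1
    then show ?thesis using that(1) assms by (auto elim!: evenE)
  next
    case 2
    then show ?thesis using that(2) assms by (cases "b = 0") auto
  next
    case 3
    then show ?thesis using that(3)[of "b + 1"] by simp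
  qed
qed

lemma stern_e_pos: "a \<ge> 2 \<Longrightarrow> stern_e a \<ge> 1"
  by (erule nat_ge_2_cases) (simp_all only: stern_e_double stern_e_4b_plus_1 stern_e_4b_minus_1 le_add2)

section \<open>Level sets of e\<close>

definition stern_level :: "nat \<Rightarrow> nat set" where
  "stern_level n = {a. 1 \<le> a \<and> stern_e a = n}"

lemma stern_level_0: "stern_level 0 = {1}"
proof -
  have "stern_e 1 = 0" by (simp add: stern_e_def)
  moreover have "a = 1" if "1 \<le> a" "stern_e a = 0" for a
    using that stern_e_pos[of a] by linarith
  ultimately show ?thesis unfolding stern_level_def by auto
qed

lemma stern_level_Suc:
  "stern_level (Suc n) =
     (\<lambda>b. 2 * b) ` stern_level n \<union> (\<lambda>b. 4 * b + 1) ` stern_level n \<union> (\<lambda>b. 4 * b - 1) ` stern_level n"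
  (is "_ = ?D \<union> ?P \<union> ?M")
proof
  show "stern_level (Suc n) \<subseteq> ?D \<union> ?P \<union> ?M"
  proof
    fix a assume "a \<in> stern_level (Suc n)"
    then have a: "a \<ge> 1" "stern_e a = Suc n" unfolding stern_level_def by auto
    moreover have "a \<noteq> 1" using a(2) by (auto simp: stern_e_def)
    ultimately have "a \<ge> 2" by simp
    then show "a \<in> ?D \<union> ?P \<union> ?M"
    proof (cases rule: nat_ge_2_cases)
      case (1 b)
      then have "b \<in> stern_level n"
        using a stern_e_double[of b] unfolding stern_level_def by simp
      then show ?thesis using 1 by blast
    next
      case (2 b)
      then have "b \<in> stern_level n"
        using a stern_e_4b_plus_1[of b] unfolding stern_level_def by simp
      then show ?thesis using 2 by blast
    next
      case (3 b)
      then have "b \<in> stern_level n"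
        using a stern_e_4b_minus_1[of b] unfolding stern_level_def by simp
      then show ?thesis using 3 by blast
    qed
  qed
  show "?D \<union> ?P \<union> ?M \<subseteq> stern_level (Suc n)"
  proof (intro Un_least image_subsetI)
    fix b assume "b \<in> stern_level n"
    then have "b \<ge> 1" "stern_e b = n" unfolding stern_level_def by auto
    then show "2 * b \<in> stern_level (Suc n)" "4 * b + 1 \<in> stern_level (Suc n)"
      "4 * b - 1 \<in> stern_level (Suc n)"
      using stern_e_double[of b] stern_e_4b_plus_1[of b] stern_e_4b_minus_1[of b]
      unfolding stern_level_def by simp_all
  qed
qed

lemma finite_stern_level: "finite (stern_level n)"
  by (induction n) (simp_all add: stern_level_0 stern_level_Suc)

lemma stern_S_level: "stern_S k n = (\<Sum>a\<in>stern_level n. a ^ k)"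
  unfolding stern_S_def stern_level_def ..

section \<open>The recurrence for S_k\<close>

lemma binomial_plus_minus:
  fixes x :: "'a :: comm_ring_1"
  shows "(x + 1) ^ k + (x - 1) ^ k =
    2 * (\<Sum>j\<in>{j. j \<le> k \<and> j mod 2 = k mod 2}. of_nat (k choose j) * x ^ j)"
proof -
  have "(x + 1) ^ k + (x - 1) ^ k = (\<Sum>j\<le>k. of_nat (k choose j) * x ^ j * (1 + (-1) ^ (k - j)))"
    using binomial_ring[of x 1 k] binomial_ring[of x "-1" k]
    by (simp add: sum.distrib[symmetric] algebra_simps)
  also have "\<dots> = (\<Sum>j\<le>k. if j mod 2 = k mod 2 then 2 * (of_nat (k choose j) * x ^ j) else 0)"
  proof (rule sum.cong)
    fix j assume "j \<in> {..k}"
    then have "even (k - j) \<longleftrightarrow> j mod 2 = k mod 2" by auto presburger+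
    then show "of_nat (k choose j) * x ^ j * (1 + (-1) ^ (k - j)) =
        (if j mod 2 = k mod 2 then 2 * (of_nat (k choose j) * x ^ j) else 0)"
      by (cases "even (k - j)") (auto simp: neg_one_odd_power)
  qed simp
  also have "\<dots> = (\<Sum>j\<in>{j. j \<le> k \<and> j mod 2 = k mod 2}. 2 * (of_nat (k choose j) * x ^ j))"
    by (subst sum.inter_filter[symmetric]) (auto intro: sum.cong)
  finally show ?thesis by (simp add: sum_distrib_left)
qed

definition parity_indices :: "nat \<Rightarrow> nat set" where
  "parity_indices k = {j. j \<le> k - 1 \<and> j mod 2 = k mod 2}"

lemma finite_parity_indices: "finite (parity_indices k)"
  unfolding parity_indices_def by simp

lemma children_power_sum:
  fixes x :: "'a :: comm_ring_1"
  assumes "k \<ge> 1"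
  shows "(2 * x) ^ k + (4 * x + 1) ^ k + (4 * x - 1) ^ k =
    of_nat (2 ^ k * (2 ^ (k + 1) + 1)) * x ^ k
      + 2 * (\<Sum>j\<in>parity_indices k. of_nat (k choose j) * 4 ^ j * x ^ j)"
proof -
  have "{j. j \<le> k \<and> j mod 2 = k mod 2} = insert k (parity_indices k)"
    and "k \<notin> parity_indices k"
    using assms unfolding parity_indices_def by auto
  then have "(4 * x + 1) ^ k + (4 * x - 1) ^ k =
      2 * (4 * x) ^ k + 2 * (\<Sum>j\<in>parity_indices k. of_nat (k choose j) * 4 ^ j * x ^ j)"
    using binomial_plus_minus[of "4 * x" k] finite_parity_indices
    by (simp add: power_mult_distrib algebra_simps)
  moreover have "(4 :: 'a) ^ k = 2 ^ k * 2 ^ k"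
    by (simp flip: power_mult_distrib)
  ultimately show ?thesis by (simp add: power_mult_distrib power_add algebra_simps)
qed

lemma sum_stern_level_Suc:
  fixes f :: "nat \<Rightarrow> 'a :: comm_monoid_add"
  shows "(\<Sum>a\<in>stern_level (Suc n). f a) =
    (\<Sum>b\<in>stern_level n. f (2 * b) + f (4 * b + 1) + f (4 * b - 1))"
proof -
  let ?L = "stern_level n"
  have pos: "b \<ge> 1" if "b \<in> ?L" for b using that unfolding stern_level_def by simp
  have inj: "inj_on (\<lambda>b. 2 * b) ?L" "inj_on (\<lambda>b. 4 * b + 1) ?L" "inj_on (\<lambda>b. 4 * b - 1) ?L"
    using pos by (auto simp: inj_on_def)
  have "(\<lambda>b. 2 * b) ` ?L \<inter> (\<lambda>b. 4 * b + 1) ` ?L = {}"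
    by auto presburger
  moreover have "((\<lambda>b. 2 * b) ` ?L \<union> (\<lambda>b. 4 * b + 1) ` ?L) \<inter> (\<lambda>b. 4 * b - 1) ` ?L = {}"
  proof -
    have "4 * b - 1 \<noteq> 2 * c \<and> 4 * b - 1 \<noteq> 4 * c + 1" if "b \<in> ?L" for b c
      using pos[OF that] by presburger
    then show ?thesis by (auto simp: image_iff)
  qed
  ultimately show ?thesis
    unfolding stern_level_Suc using finite_stern_level inj
    by (simp add: sum.union_disjoint sum.reindex sum.distrib)
qed

lemma stern_S_Suc:
  assumes "k \<ge> 1"
  shows "(of_nat (stern_S k (Suc n)) :: 'a :: comm_ring_1) =
    of_nat (2 ^ k * (2 ^ (k + 1) + 1)) * of_nat (stern_S k n)
      + 2 * (\<Sum>j\<in>parity_indices k. of_nat (k choose j) * 4 ^ j * of_nat (stern_S j n))"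
proof -
  let ?c = "of_nat (2 ^ k * (2 ^ (k + 1) + 1)) :: 'a"
  let ?L = "stern_level n"
  have "(of_nat (stern_S k (Suc n)) :: 'a) = (\<Sum>a\<in>stern_level (Suc n). of_nat a ^ k)"
    by (simp add: stern_S_level)
  also have "\<dots> = (\<Sum>b\<in>?L. (2 * of_nat b) ^ k + (4 * of_nat b + 1) ^ k + (4 * of_nat b - 1) ^ k)"
    unfolding sum_stern_level_Suc
    by (rule sum.cong) (simp_all add: stern_level_def of_nat_diff add.commute)
  also have "\<dots> = (\<Sum>b\<in>?L. ?c * of_nat b ^ k
      + 2 * (\<Sum>j\<in>parity_indices k. of_nat (k choose j) * 4 ^ j * of_nat b ^ j))"
    by (rule sum.cong[OF refl], rule children_power_sum[OF assms])
  also have "\<dots> = ?c * (\<Sum>b\<in>?L. of_nat b ^ k)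
      + 2 * (\<Sum>j\<in>parity_indices k. of_nat (k choose j) * 4 ^ j * (\<Sum>b\<in>?L. of_nat b ^ j))"
    by (simp add: sum.distrib sum_distrib_left mult.assoc sum.swap[of _ ?L])
  finally show ?thesis by (simp add: stern_S_level)
qed

section \<open>Generating functions\<close>

lemma fps_first_order_recurrence:
  fixes f g :: "'a :: field fps"
  assumes rec: "\<And>n. f $ Suc n = c * f $ n + g $ n"
  shows "f = (fps_const (f $ 0) + fps_X * g) / (1 - fps_const c * fps_X)"
proof -
  let ?D = "1 - fps_const c * fps_X"
  have "?D $ 0 \<noteq> 0" by simp
  then have "?D \<noteq> 0" by auto
  moreover have "f * ?D = fps_const (f $ 0) + fps_X * g"
  proof (rule fps_ext)
    fix n show "(f * ?D) $ n = (fps_const (f $ 0) + fps_X * g) $ n"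
      by (cases n) (simp_all add: rec algebra_simps)
  qed
  ultimately show ?thesis by (metis nonzero_mult_div_cancel_right)
qed

lemma stern_G_nth: "stern_G k $ n = of_nat (stern_S k n)"
  unfolding stern_G_def by simp

theorem mainTheorem9:
  fixes k :: nat
  assumes "1 \<le> k"
  shows "stern_G k =
    (1 + 2 * fps_X * (\<Sum>j\<in>{j. j \<le> k - 1 \<and> j mod 2 = k mod 2}.
                        of_nat (k choose j) * 4 ^ j * stern_G j))
    / (1 - of_nat (2 ^ k * (2 ^ (k + 1) + 1)) * fps_X)"
proof -
  define c :: rat where "c = of_nat (2 ^ k * (2 ^ (k + 1) + 1))"
  define g :: "rat fps" where
    "g = 2 * (\<Sum>j\<in>parity_indices k. of_nat (k choose j) * 4 ^ j * stern_G j)"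
  have "stern_G k $ Suc n = c * stern_G k $ n + g $ n" for n
    unfolding g_def c_def
    by (simp add: stern_G_nth stern_S_Suc[OF assms] fps_sum_nth fps_of_nat[symmetric]
        fps_numeral_fps_const mult.assoc)
  then have "stern_G k = (fps_const (stern_G k $ 0) + fps_X * g) / (1 - fps_const c * fps_X)"
    by (rule fps_first_order_recurrence)
  moreover have "stern_G k $ 0 = 1"
    by (simp add: stern_G_nth stern_S_level stern_level_0)
  ultimately show ?thesis
    unfolding g_def c_def parity_indices_def by (simp add: fps_of_nat[symmetric] ac_simps)
qed

end
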